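(* Let $\Omega\subseteq\mathbb{R}^3$ be a domain and let $f_0\colon\Omega\to\mathbb{R}$ be a real-valued (twice differentiable) function which is inframonogenic, i.e. $\overline{\partial} f_0\overline{\partial}=0$. Then locally one has \[ f_0(x_0,x_1,x_2)=c_0(2x_0^2+x_1^2+x_2^2)+c_1x_0+c_2+h(x_1,x_2),\] where $c_0,c_1,c_2\in\mathbb{R}$ are constants and $h$ is a harmonic function of the two variables $(x_1,x_2)$.
   Context: $\mathbb{H}$ denotes the real quaternions with basis $e_0=1,e_1,e_2,e_3$ and $e_1^2=e_2^2=e_3^2=e_1e_2e_3=-1$; points of $\mathbb{R}^3$ are $x=x_0+x_1e_1+x_2e_2$. With $\partial_i=\partial/\partial x_i$, $\overline{\partial} g=\partial_0 g+e_1\partial_1 g+e_2\partial_2 g$ (left action), $g\overline{\partial}=\partial_0 g+(\partial_1 g)e_1+(\partial_2 g)e_2$ (right action), and $\overline{\partial} g\overline{\partial}:=\overline{\partial}(g\overline{\partial})$. "Locally" means in a suitable neighborhood of each point of $\Omega$. *)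

theory Defs
  imports "HOL-Analysis.Analysis"
begin

text \<open>Real quaternions, represented as 4-tuples (q0,q1,q2,q3) = q0 + q1 e1 + q2 e2 + q3 e3,
  with the real vector/norm structure of the product type and the Hamilton product below
  (e1^2 = e2^2 = e3^2 = e1 e2 e3 = -1).\<close>

type_synonym quat = "real \<times> real \<times> real \<times> real"

definition qmult :: "quat \<Rightarrow> quat \<Rightarrow> quat" (infixl "\<odot>" 70) where
  "qmult a b = (case a of (a0, a1, a2, a3) \<Rightarrow> case b of (b0, b1, b2, b3) \<Rightarrow>
     (a0*b0 - a1*b1 - a2*b2 - a3*b3,
      a0*b1 + a1*b0 + a2*b3 - a3*b2,
      a0*b2 - a1*b3 + a2*b0 + a3*b1,
      a0*b3 + a1*b2 - a2*b1 + a3*b0))"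

definition qe1 :: quat where "qe1 = (0, 1, 0, 0)"
definition qe2 :: quat where "qe2 = (0, 0, 1, 0)"

definition qreal :: "real \<Rightarrow> quat" where "qreal r = (r, 0, 0, 0)"

definition pdir :: "'a::real_normed_vector \<Rightarrow> ('a \<Rightarrow> 'b::real_normed_vector) \<Rightarrow> 'a \<Rightarrow> 'b" where
  "pdir v g x = vector_derivative (\<lambda>t::real. g (x + t *\<^sub>R v)) (at 0)"

definition d0 :: "(real \<times> real \<times> real \<Rightarrow> 'b::real_normed_vector) \<Rightarrow> real \<times> real \<times> real \<Rightarrow> 'b"
  where "d0 = pdir (1, 0, 0)"
definition d1 :: "(real \<times> real \<times> real \<Rightarrow> 'b::real_normed_vector) \<Rightarrow> real \<times> real \<times> real \<Rightarrow> 'b"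
  where "d1 = pdir (0, 1, 0)"
definition d2 :: "(real \<times> real \<times> real \<Rightarrow> 'b::real_normed_vector) \<Rightarrow> real \<times> real \<times> real \<Rightarrow> 'b"
  where "d2 = pdir (0, 0, 1)"

definition dbar_left :: "(real \<times> real \<times> real \<Rightarrow> quat) \<Rightarrow> real \<times> real \<times> real \<Rightarrow> quat" where
  "dbar_left g x = d0 g x + qe1 \<odot> d1 g x + qe2 \<odot> d2 g x"

definition dbar_right :: "(real \<times> real \<times> real \<Rightarrow> quat) \<Rightarrow> real \<times> real \<times> real \<Rightarrow> quat" where
  "dbar_right g x = d0 g x + d1 g x \<odot> qe1 + d2 g x \<odot> qe2"

definition inframonogenic_on :: "(real \<times> real \<times> real) set \<Rightarrow> (real \<times> real \<times> real \<Rightarrow> quat) \<Rightarrow> bool" where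
  "inframonogenic_on S g \<longleftrightarrow> (\<forall>x\<in>S. dbar_left (dbar_right g) x = 0)"

definition twice_differentiable_on :: "'a::euclidean_space set \<Rightarrow> ('a \<Rightarrow> real) \<Rightarrow> bool" where
  "twice_differentiable_on S f \<longleftrightarrow>
     (\<forall>x\<in>S. f differentiable (at x) \<and> (\<forall>b\<in>Basis. pdir b f differentiable (at x)))"

definition harmonic_on :: "'a::euclidean_space set \<Rightarrow> ('a \<Rightarrow> real) \<Rightarrow> bool" where
  "harmonic_on S h \<longleftrightarrow> twice_differentiable_on S h \<and>
     (\<forall>x\<in>S. (\<Sum>b\<in>Basis. pdir b (pdir b h) x) = 0)"

end

theory Submission
  imports Defs
begin

text \<open>For real-valued \<open>f\<close> the scalar, \<open>e\<^sub>1\<close> and \<open>e\<^sub>2\<close> parts of \<open>\<partial>bar (f \<partial>bar)\<close> are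
  \<open>\<partial>\<^sub>0\<^sup>2 f - \<partial>\<^sub>1\<^sup>2 f - \<partial>\<^sub>2\<^sup>2 f\<close>, \<open>\<partial>\<^sub>1\<partial>\<^sub>0 f + \<partial>\<^sub>0\<partial>\<^sub>1 f\<close> and \<open>\<partial>\<^sub>2\<partial>\<^sub>0 f + \<partial>\<^sub>0\<partial>\<^sub>2 f\<close>.  As mixed partials
  commute, inframonogenicity forces \<open>\<partial>\<^sub>0\<partial>\<^sub>1 f = \<partial>\<^sub>0\<partial>\<^sub>2 f = 0\<close> and \<open>\<partial>\<^sub>0\<^sup>2 f = \<partial>\<^sub>1\<^sup>2 f + \<partial>\<^sub>2\<^sup>2 f\<close>.
  On a box \<open>A \<times> B\<close> around a point, \<open>\<partial>\<^sub>0 f\<close> then depends on \<open>x\<^sub>0\<close> only and \<open>\<partial>\<^sub>1 f\<close>, \<open>\<partial>\<^sub>2 f\<close>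
  on \<open>(x\<^sub>1, x\<^sub>2)\<close> only, so \<open>\<partial>\<^sub>0\<^sup>2 f\<close>, a function of \<open>x\<^sub>0\<close>, equals the planar Laplacian of \<open>f\<close>,
  a function of \<open>(x\<^sub>1, x\<^sub>2)\<close>: both are a constant \<open>4 c\<^sub>0\<close>.  Integrating twice in \<open>x\<^sub>0\<close> gives
  \<open>f = 2 c\<^sub>0 x\<^sub>0\<^sup>2 + c\<^sub>1 x\<^sub>0 + g(x\<^sub>1, x\<^sub>2)\<close> with \<open>\<Delta>g = 4 c\<^sub>0\<close>, and \<open>h = g - c\<^sub>0 (x\<^sub>1\<^sup>2 + x\<^sub>2\<^sup>2)\<close>
  is harmonic.\<close>

section \<open>Directional derivatives\<close>

lemma has_derivative_along_line:
  assumes "(F has_derivative F') (at (x + t *\<^sub>R v))"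
  shows "((\<lambda>s. F (x + s *\<^sub>R v)) has_vector_derivative F' v) (at t)"
proof -
  have "((\<lambda>s. x + s *\<^sub>R v) has_derivative (\<lambda>s. s *\<^sub>R v)) (at t)"
    by (auto intro!: derivative_eq_intros)
  from has_derivative_compose[OF this assms]
  have "((\<lambda>s. F (x + s *\<^sub>R v)) has_derivative (\<lambda>s. F' (s *\<^sub>R v))) (at t)" .
  moreover have "F' (s *\<^sub>R v) = s *\<^sub>R F' v" for s
    using has_derivative_bounded_linear[OF assms] by (simp add: linear_simps)
  ultimately show ?thesis by (simp add: has_vector_derivative_def)
qed

lemma has_derivative_pdir:
  assumes "(F has_derivative F') (at x)"
  shows "pdir v F x = F' v"
  unfolding pdir_def using has_derivative_along_line[of F F' x 0 v] assms
  by (simp add: vector_derivative_at)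

lemma pdir_cong_open:
  assumes "open S" "x \<in> S" "\<And>y. y \<in> S \<Longrightarrow> F y = G y"
  shows "pdir v F x = pdir v G x"
proof -
  have "((\<lambda>s. x + s *\<^sub>R v) \<longlongrightarrow> x) (nhds 0)"
    by (auto intro!: tendsto_eq_intros filterlim_ident)
  then have "\<forall>\<^sub>F s in nhds 0. x + s *\<^sub>R v \<in> S"
    using assms(1,2) by (rule topological_tendstoD)
  then have "\<forall>\<^sub>F s in nhds 0. s \<in> UNIV \<longrightarrow> F (x + s *\<^sub>R v) = G (x + s *\<^sub>R v)"
    by eventually_elim (simp add: assms(3))
  then show ?thesis
    unfolding pdir_def by (rule vector_derivative_cong_eq) simp_all
qed

lemma pdir_diff:
  assumes "F differentiable at x" "G differentiable at x"
  shows "pdir v (\<lambda>y. F y - G y) x = pdir v F x - pdir v G x"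
proof -
  obtain F' G' where F': "(F has_derivative F') (at x)" and G': "(G has_derivative G') (at x)"
    using assms by (auto simp: differentiable_def)
  have FG': "((\<lambda>y. F y - G y) has_derivative (\<lambda>w. F' w - G' w)) (at x)"
    using F' G' by (rule has_derivative_diff)
  show ?thesis
    unfolding has_derivative_pdir[OF FG'] has_derivative_pdir[OF F'] has_derivative_pdir[OF G'] ..
qed

lemma pdir_slice_snd: "pdir (0, w) F (t, y) = pdir w (\<lambda>z. F (t, z)) y"
  by (simp add: pdir_def)

lemma d0_slice: "d0 F (t, y) = pdir 1 (\<lambda>s. F (s, y)) t"
  by (simp add: d0_def pdir_def flip: zero_prod_def)

lemma d1_slice: "d1 F (t, y) = pdir (1, 0) (\<lambda>z. F (t, z)) y"
  by (simp add: d1_def pdir_def)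

lemma d2_slice: "d2 F (t, y) = pdir (0, 1) (\<lambda>z. F (t, z)) y"
  by (simp add: d2_def pdir_def)

lemma differentiable_at_slice_fst:
  "F differentiable at (t, y) \<Longrightarrow> (\<lambda>s. F (s, y)) differentiable at t"
  using differentiable_chain_at[of "\<lambda>s. (s, y)" t F] by (simp add: o_def)

lemma differentiable_at_slice_snd:
  "F differentiable at (t, y) \<Longrightarrow> (\<lambda>z. F (t, z)) differentiable at y"
  using differentiable_chain_at[of "\<lambda>z. (t, z)" y F] by (simp add: o_def)

lemma constant_if_pdir_Basis_zero:
  fixes F :: "'a::euclidean_space \<Rightarrow> 'b::real_normed_vector"
  assumes "convex S" "\<And>y. y \<in> S \<Longrightarrow> F differentiable at y"
    and "\<And>y b. y \<in> S \<Longrightarrow> b \<in> Basis \<Longrightarrow> pdir b F y = 0"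
    and "x \<in> S" "y \<in> S"
  shows "F x = F y"
proof -
  have "(F has_derivative (\<lambda>h. 0)) (at z within S)" if "z \<in> S" for z
  proof -
    define F' where "F' = frechet_derivative F (at z)"
    have F': "(F has_derivative F') (at z)"
      using assms(2)[OF that] by (simp add: F'_def frechet_derivative_works)
    have "F' = (\<lambda>h. 0)"
      using has_derivative_linear[OF F'] linear_zero
      by (rule linear_eq_stdbasis) (use assms(3)[OF that] has_derivative_pdir[OF F'] in simp)
    then show ?thesis using F' by (simp add: has_derivative_at_withinI)
  qed
  then obtain c where "\<forall>z\<in>S. F z = c"
    using has_derivative_zero_constant[OF assms(1)] by blast
  then show ?thesis using assms(4,5) by simp
qed

section \<open>Symmetry of mixed directional derivatives\<close>

definition second_difference :: "('a::real_vector \<Rightarrow> real) \<Rightarrow> 'a \<Rightarrow> 'a \<Rightarrow> 'a \<Rightarrow> real" where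
  "second_difference f x u v = f (x + u + v) - f (x + u) - f (x + v) + f x"

lemma second_difference_commute: "second_difference f x u v = second_difference f x v u"
  by (simp add: second_difference_def algebra_simps)

lemma second_difference_mean_value:
  fixes f :: "'a::real_normed_vector \<Rightarrow> real"
  assumes "\<And>y. y \<in> S \<Longrightarrow> (f has_derivative f' y) (at y)"
    and "\<And>t. t \<in> {0..1} \<Longrightarrow> x + t *\<^sub>R u \<in> S \<and> x + v + t *\<^sub>R u \<in> S"
  shows "\<exists>t\<in>{0<..<1}. second_difference f x u v = f' (x + v + t *\<^sub>R u) u - f' (x + t *\<^sub>R u) u"
proof -
  define g where "g t = f (x + v + t *\<^sub>R u) - f (x + t *\<^sub>R u)" for t
  have "(g has_real_derivative f' (x + v + t *\<^sub>R u) u - f' (x + t *\<^sub>R u) u) (at t)"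
    if "0 \<le> t" "t \<le> 1" for t
    using has_derivative_along_line[OF assms(1), of "x + v" t u]
      has_derivative_along_line[OF assms(1), of x t u] assms(2)[of t] that
    unfolding g_def has_real_derivative_iff_has_vector_derivative
    by (auto intro!: derivative_eq_intros)
  from MVT2[of 0 1 g, OF _ this] obtain t where "0 < t" "t < 1"
    and "g 1 - g 0 = f' (x + v + t *\<^sub>R u) u - f' (x + t *\<^sub>R u) u"
    by auto
  then show ?thesis
    unfolding g_def second_difference_def by (intro bexI[of _ t]) (simp_all add: algebra_simps)
qed

lemma second_difference_mean_value_partial:
  fixes f :: "'a::real_normed_vector \<Rightarrow> real"
  assumes f': "\<And>y. y \<in> S \<Longrightarrow> (f has_derivative f' y) (at y)"
    and Du: "\<And>y. y \<in> S \<Longrightarrow> Du y = f' y u"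
    and seg: "\<And>s. s \<in> {0..h} \<Longrightarrow> x + s *\<^sub>R u \<in> S \<and> x + (s *\<^sub>R u + h *\<^sub>R v) \<in> S"
    and "0 < h"
  shows "\<exists>s\<in>{0..h}. second_difference f x (h *\<^sub>R u) (h *\<^sub>R v)
           = h * (Du (x + (s *\<^sub>R u + h *\<^sub>R v)) - Du (x + s *\<^sub>R u))"
proof -
  have th: "t * h \<in> {0..h}" if "t \<in> {0..1}" for t
    using that \<open>0 < h\<close> by (auto simp: mult_le_cancel_right1)
  have "x + t *\<^sub>R h *\<^sub>R u \<in> S \<and> x + h *\<^sub>R v + t *\<^sub>R h *\<^sub>R u \<in> S" if "t \<in> {0..1}" for t
    using seg[OF th[OF that]] by (simp add: add_ac)
  from second_difference_mean_value[OF f' this] obtain t where "t \<in> {0<..<1}"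
    and mv: "second_difference f x (h *\<^sub>R u) (h *\<^sub>R v)
      = f' (x + h *\<^sub>R v + t *\<^sub>R h *\<^sub>R u) (h *\<^sub>R u) - f' (x + t *\<^sub>R h *\<^sub>R u) (h *\<^sub>R u)"
    by blast
  then have t: "t * h \<in> {0..h}" by (intro th) simp
  have "f' y (h *\<^sub>R u) = h * Du y" if "y \<in> S" for y
    using has_derivative_bounded_linear[OF f'[OF that]] Du[OF that] by (simp add: linear_simps)
  then show ?thesis
    using mv seg[OF t] by (intro bexI[OF _ t]) (simp add: add_ac right_diff_distrib)
qed

lemma second_difference_estimate:
  fixes f :: "'a::real_normed_vector \<Rightarrow> real"
  assumes f': "\<And>y. y \<in> S \<Longrightarrow> (f has_derivative f' y) (at y)"
    and Du: "\<And>y. y \<in> S \<Longrightarrow> Du y = f' y u"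
    and "bounded_linear Au" "0 \<le> e" "0 < h"
    and remainder: "\<And>w. norm w < d \<Longrightarrow> \<bar>Du (x + w) - Du x - Au w\<bar> \<le> e * norm w"
    and near: "\<And>a b. 0 \<le> a \<Longrightarrow> a \<le> h \<Longrightarrow> 0 \<le> b \<Longrightarrow> b \<le> h \<Longrightarrow>
      norm (a *\<^sub>R u + b *\<^sub>R v) < d \<and> x + (a *\<^sub>R u + b *\<^sub>R v) \<in> S"
  shows "\<bar>second_difference f x (h *\<^sub>R u) (h *\<^sub>R v) / h\<^sup>2 - Au v\<bar> \<le> e * (2 * norm u + norm v)"
proof -
  have "x + a *\<^sub>R u \<in> S \<and> x + (a *\<^sub>R u + h *\<^sub>R v) \<in> S" if "a \<in> {0..h}" for a
    using near[of a 0] near[of a h] that \<open>0 < h\<close> by auto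
  from second_difference_mean_value_partial[OF f' Du this \<open>0 < h\<close>] obtain s where s: "s \<in> {0..h}"
    and sd: "second_difference f x (h *\<^sub>R u) (h *\<^sub>R v) = h * (Du (x + (s *\<^sub>R u + h *\<^sub>R v)) - Du (x + s *\<^sub>R u))"
    by blast
  define w1 where "w1 = s *\<^sub>R u + h *\<^sub>R v"
  define w2 where "w2 = s *\<^sub>R u"
  have "norm w1 < d" "norm w2 < d"
    using near[of s h] near[of s 0] s \<open>0 < h\<close> unfolding w1_def w2_def by auto
  then have "\<bar>Du (x + w1) - Du x - Au w1\<bar> \<le> e * norm w1" "\<bar>Du (x + w2) - Du x - Au w2\<bar> \<le> e * norm w2"
    by (simp_all add: remainder)
  moreover have "Au w1 - Au w2 = h * Au v"
    using \<open>bounded_linear Au\<close> unfolding w1_def w2_def by (simp add: linear_simps)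
  ultimately have "\<bar>Du (x + w1) - Du (x + w2) - h * Au v\<bar> \<le> e * (norm w1 + norm w2)"
    by (smt (verit) distrib_left)
  also have "\<dots> \<le> e * (h * (2 * norm u + norm v))"
  proof (rule mult_left_mono)
    have "norm w1 \<le> s * norm u + h * norm v"
      using norm_triangle_ineq[of "s *\<^sub>R u" "h *\<^sub>R v"] s \<open>0 < h\<close> by (simp add: w1_def)
    moreover have "s * norm u \<le> h * norm u"
      using s by (intro mult_right_mono) auto
    ultimately show "norm w1 + norm w2 \<le> h * (2 * norm u + norm v)"
      using s unfolding w2_def distrib_left by simp
  qed (use \<open>0 \<le> e\<close> in simp)
  finally have "\<bar>Du (x + w1) - Du (x + w2) - h * Au v\<bar> / h \<le> e * (2 * norm u + norm v)"
    using \<open>0 < h\<close> by (simp add: pos_divide_le_eq mult_ac)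
  moreover have "second_difference f x (h *\<^sub>R u) (h *\<^sub>R v) / h\<^sup>2 - Au v
      = (Du (x + w1) - Du (x + w2) - h * Au v) / h"
    using \<open>0 < h\<close> unfolding sd w1_def w2_def by (simp add: power2_eq_square field_simps)
  ultimately show ?thesis using \<open>0 < h\<close> by simp
qed

lemma second_difference_tendsto:
  fixes f :: "'a::real_normed_vector \<Rightarrow> real"
  assumes "open S" "x \<in> S" "\<And>y. y \<in> S \<Longrightarrow> (f has_derivative f' y) (at y)"
    and "(Du has_derivative Au) (at x)" "\<And>y. y \<in> S \<Longrightarrow> Du y = f' y u"
  shows "((\<lambda>h. second_difference f x (h *\<^sub>R u) (h *\<^sub>R v) / h\<^sup>2) \<longlongrightarrow> Au v) (at_right 0)"
proof (rule tendstoI)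
  fix \<epsilon> :: real assume "\<epsilon> > 0"
  define C where "C = 2 * norm u + norm v + 1"
  define e where "e = \<epsilon> / C"
  have "C > 0" unfolding C_def by (intro add_nonneg_pos) simp_all
  then have "e > 0" using \<open>\<epsilon> > 0\<close> by (simp add: e_def)
  then obtain d where "d > 0"
    and d: "\<And>y. norm (y - x) < d \<Longrightarrow> \<bar>Du y - Du x - Au (y - x)\<bar> \<le> e * norm (y - x)"
    using assms(4) unfolding has_derivative_at_alt by (metis real_norm_def)
  have remainder: "\<bar>Du (x + w) - Du x - Au w\<bar> \<le> e * norm w" if "norm w < d" for w
    using d[of "x + w"] that by simp
  obtain r where "r > 0" "ball x r \<subseteq> S" using assms(1,2) open_contains_ball by blast
  have "\<forall>\<^sub>F h in at_right 0. h \<in> {0<..<min d r / C}"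
    using \<open>d > 0\<close> \<open>r > 0\<close> \<open>C > 0\<close> by (intro eventually_at_right_real) simp
  then show "\<forall>\<^sub>F h in at_right 0. dist (second_difference f x (h *\<^sub>R u) (h *\<^sub>R v) / h\<^sup>2) (Au v) < \<epsilon>"
  proof eventually_elim
    fix h assume h: "h \<in> {0<..<min d r / C}"
    have "norm (a *\<^sub>R u + b *\<^sub>R v) < min d r" if "0 \<le> a" "a \<le> h" "0 \<le> b" "b \<le> h" for a b
    proof -
      have "norm (a *\<^sub>R u + b *\<^sub>R v) \<le> h * norm u + h * norm v"
        using norm_triangle_ineq[of "a *\<^sub>R u" "b *\<^sub>R v"] mult_right_mono[OF that(2), of "norm u"]
          mult_right_mono[OF that(4), of "norm v"] that by simp
      also have "\<dots> \<le> h * C"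
        using h unfolding C_def by (simp add: mult_left_mono flip: distrib_left)
      also have "\<dots> < min d r"
        using h \<open>C > 0\<close> by (simp add: pos_less_divide_eq mult.commute)
      finally show ?thesis .
    qed
    moreover have "x + w \<in> S" if "norm w < r" for w
      using that \<open>ball x r \<subseteq> S\<close> norm_minus_cancel[of w] by (auto simp: dist_norm)
    ultimately have "\<bar>second_difference f x (h *\<^sub>R u) (h *\<^sub>R v) / h\<^sup>2 - Au v\<bar> \<le> e * (2 * norm u + norm v)"
      using h \<open>e > 0\<close> remainder
      by (intro second_difference_estimate[OF assms(3,5) has_derivative_bounded_linear[OF assms(4)],
          where d = d]) auto
    also have "\<dots> < e * C"
      using \<open>e > 0\<close> unfolding C_def by simp
    finally show "dist (second_difference f x (h *\<^sub>R u) (h *\<^sub>R v) / h\<^sup>2) (Au v) < \<epsilon>"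
      using \<open>C > 0\<close> by (simp add: e_def dist_real_def)
  qed
qed

text \<open>Schwarz's theorem under the hypotheses of \<open>twice_differentiable_on\<close>: both mixed
  derivatives are limits of the same symmetric second-difference quotient, so no continuity of
  second derivatives is needed.\<close>

theorem pdir_pdir_commute:
  fixes f :: "'a::real_normed_vector \<Rightarrow> real"
  assumes "open S" "x \<in> S" "\<And>y. y \<in> S \<Longrightarrow> f differentiable at y"
    and "pdir u f differentiable at x" "pdir v f differentiable at x"
  shows "pdir v (pdir u f) x = pdir u (pdir v f) x"
proof -
  define f' where "f' y = frechet_derivative f (at y)" for y
  have f': "(f has_derivative f' y) (at y)" if "y \<in> S" for y
    using assms(3)[OF that] by (simp add: f'_def frechet_derivative_works)
  have lim: "((\<lambda>h. second_difference f x (h *\<^sub>R w) (h *\<^sub>R w') / h\<^sup>2) \<longlongrightarrow> pdir w' (pdir w f) x)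
      (at_right 0)" if "pdir w f differentiable at x" for w w'
    using second_difference_tendsto[OF assms(1,2) f', of "pdir w f" _ w w']
      that[unfolded frechet_derivative_works] has_derivative_pdir[OF f']
      has_derivative_pdir[OF that[unfolded frechet_derivative_works]]
    by simp
  have "((\<lambda>h. second_difference f x (h *\<^sub>R u) (h *\<^sub>R v) / h\<^sup>2) \<longlongrightarrow> pdir u (pdir v f) x)
      (at_right 0)"
    using lim[OF assms(5), of u] by (simp add: second_difference_commute)
  with lim[OF assms(4), of v] show ?thesis
    by (rule tendsto_unique[OF trivial_limit_at_right_real])
qed

section \<open>Real-valued inframonogenic functions\<close>

lemma Basis_real_pair: "(Basis :: (real \<times> real) set) = {(1, 0), (0, 1)}"
  by (auto simp: Basis_prod_def zero_prod_def)

lemma Basis_real_triple: "(Basis :: (real \<times> real \<times> real) set) = {(1, 0, 0), (0, 1, 0), (0, 0, 1)}"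
  by (auto simp: Basis_prod_def zero_prod_def)

lemma twice_differentiable_onD:
  fixes f :: "real \<times> real \<times> real \<Rightarrow> real"
  assumes "twice_differentiable_on S f" "x \<in> S"
  shows "f differentiable at x" "d0 f differentiable at x" "d1 f differentiable at x"
    "d2 f differentiable at x"
  using assms unfolding twice_differentiable_on_def d0_def d1_def d2_def Basis_real_triple by auto

lemma dbar_right_qreal:
  assumes "f differentiable at x"
  shows "dbar_right (\<lambda>y. qreal (f y)) x = (d0 f x, d1 f x, d2 f x, 0)"
proof -
  obtain f' where f': "(f has_derivative f') (at x)"
    using assms by (auto simp: differentiable_def)
  then have qf': "((\<lambda>y. qreal (f y)) has_derivative (\<lambda>w. qreal (f' w))) (at x)"
    unfolding qreal_def by (auto intro!: derivative_eq_intros simp: zero_prod_def)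
  show ?thesis
    unfolding dbar_right_def d0_def d1_def d2_def has_derivative_pdir[OF qf'] has_derivative_pdir[OF f']
    by (simp add: qreal_def qmult_def qe1_def qe2_def)
qed

lemma dbar_left_vector:
  assumes "a differentiable at x" "b differentiable at x" "c differentiable at x"
  shows "dbar_left (\<lambda>y. (a y, b y, c y, 0)) x
    = (d0 a x - d1 b x - d2 c x, d1 a x + d0 b x, d2 a x + d0 c x, d1 c x - d2 b x)"
proof -
  obtain a' b' c' where a': "(a has_derivative a') (at x)" and b': "(b has_derivative b') (at x)"
    and c': "(c has_derivative c') (at x)"
    using assms by (auto simp: differentiable_def)
  then have abc': "((\<lambda>y. (a y, b y, c y, 0::real)) has_derivative (\<lambda>w. (a' w, b' w, c' w, 0))) (at x)"
    by (auto intro!: derivative_eq_intros)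
  show ?thesis
    unfolding dbar_left_def d0_def d1_def d2_def has_derivative_pdir[OF abc']
      has_derivative_pdir[OF a'] has_derivative_pdir[OF b'] has_derivative_pdir[OF c']
    by (simp add: qmult_def qe1_def qe2_def)
qed

definition inframonogenic_system :: "(real \<times> real \<times> real \<Rightarrow> real) \<Rightarrow> real \<times> real \<times> real \<Rightarrow> bool"
  where "inframonogenic_system f x \<longleftrightarrow>
    d1 (d0 f) x = 0 \<and> d2 (d0 f) x = 0 \<and> d0 (d1 f) x = 0 \<and> d0 (d2 f) x = 0 \<and>
    d0 (d0 f) x = d1 (d1 f) x + d2 (d2 f) x"

lemma inframonogenic_real_imp_system:
  fixes f :: "real \<times> real \<times> real \<Rightarrow> real"
  assumes "open \<Omega>" "twice_differentiable_on \<Omega> f" "inframonogenic_on \<Omega> (\<lambda>x. qreal (f x))"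
    and "x \<in> \<Omega>"
  shows "inframonogenic_system f x"
proof -
  note diff = twice_differentiable_onD[OF assms(2)]
  have "pdir v (\<lambda>y. (d0 f y, d1 f y, d2 f y, 0)) x = pdir v (dbar_right (\<lambda>y. qreal (f y))) x" for v
    by (rule pdir_cong_open[OF assms(1,4)]) (simp add: dbar_right_qreal diff(1))
  then have "dbar_left (\<lambda>y. (d0 f y, d1 f y, d2 f y, 0)) x = dbar_left (dbar_right (\<lambda>y. qreal (f y))) x"
    by (simp only: dbar_left_def d0_def d1_def d2_def)
  also have "\<dots> = 0"
    using assms(3,4) by (simp add: inframonogenic_on_def)
  finally have "(d0 (d0 f) x - d1 (d1 f) x - d2 (d2 f) x, d1 (d0 f) x + d0 (d1 f) x,
      d2 (d0 f) x + d0 (d2 f) x, d1 (d2 f) x - d2 (d1 f) x) = 0"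
    using dbar_left_vector[OF diff(2-4)[OF assms(4)]] by simp
  moreover have "d1 (d0 f) x = d0 (d1 f) x" "d2 (d0 f) x = d0 (d2 f) x"
    using pdir_pdir_commute[OF assms(1,4) diff(1)] diff(2-4)[OF assms(4)]
    unfolding d0_def d1_def d2_def by blast+
  ultimately show ?thesis
    unfolding inframonogenic_system_def by (simp add: zero_prod_def)
qed

lemma twice_differentiable_on_slice_snd:
  fixes F :: "'a::euclidean_space \<times> 'b::euclidean_space \<Rightarrow> real"
  assumes "twice_differentiable_on S F" "\<And>y. y \<in> T \<Longrightarrow> (t, y) \<in> S"
  shows "twice_differentiable_on T (\<lambda>y. F (t, y))"
proof -
  have "(0, b) \<in> Basis" if "b \<in> Basis" for b :: 'b
    using that by (simp add: Basis_prod_def)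
  then show ?thesis
    using assms unfolding twice_differentiable_on_def pdir_slice_snd[symmetric]
    by (auto intro: differentiable_at_slice_snd)
qed

lemma harmonic_on_diff_norm_square:
  fixes g :: "'a::euclidean_space \<Rightarrow> real" and c :: real
  assumes "open S" "twice_differentiable_on S g"
    and "\<And>y. y \<in> S \<Longrightarrow> (\<Sum>b\<in>Basis. pdir b (pdir b g) y) = 2 * real DIM('a) * c"
  shows "harmonic_on S (\<lambda>y. g y - c * (norm y)\<^sup>2)"
proof -
  have sq: "((\<lambda>y. c * (norm y)\<^sup>2) has_derivative (\<lambda>w. 2 * c * (y \<bullet> w))) (at y)" for y :: 'a
    unfolding power2_norm_eq_inner by (auto intro!: derivative_eq_intros simp: inner_commute)
  have sq_diff: "(\<lambda>y. c * (norm y)\<^sup>2) differentiable at y" for y :: 'a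
    using sq by (rule differentiableI)
  have lin: "((\<lambda>y. 2 * c * (y \<bullet> b)) has_derivative (\<lambda>w. 2 * c * (w \<bullet> b))) (at y)" for y b :: 'a
    by (auto intro!: derivative_eq_intros)
  have pdir_h: "pdir b (\<lambda>y. g y - c * (norm y)\<^sup>2) y = pdir b g y - 2 * c * (y \<bullet> b)"
    if "y \<in> S" for b y :: 'a
    using assms(2) that sq_diff
    by (simp add: twice_differentiable_on_def pdir_diff has_derivative_pdir[OF sq])
  have pdir_h_deriv: "(pdir b (\<lambda>y. g y - c * (norm y)\<^sup>2) has_derivative
      (\<lambda>w. frechet_derivative (pdir b g) (at y) w - 2 * c * (w \<bullet> b))) (at y)"
    if "y \<in> S" "b \<in> Basis" for b y :: 'a
  proof (rule has_derivative_transform_within_open[OF _ assms(1) that(1)])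
    show "((\<lambda>y. pdir b g y - 2 * c * (y \<bullet> b)) has_derivative
        (\<lambda>w. frechet_derivative (pdir b g) (at y) w - 2 * c * (w \<bullet> b))) (at y)"
      using assms(2) that lin
      by (auto intro!: has_derivative_diff simp: twice_differentiable_on_def frechet_derivative_works)
  qed (use pdir_h in simp)
  show ?thesis
    unfolding harmonic_on_def twice_differentiable_on_def
  proof (intro conjI ballI)
    fix y b :: 'a assume "y \<in> S" "b \<in> Basis"
    show "pdir b (\<lambda>y. g y - c * (norm y)\<^sup>2) differentiable at y"
      using pdir_h_deriv[OF \<open>y \<in> S\<close> \<open>b \<in> Basis\<close>] by (rule differentiableI)
  next
    fix y :: 'a assume "y \<in> S"
    then show "(\<lambda>y. g y - c * (norm y)\<^sup>2) differentiable at y"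
      using assms(2) sq_diff by (auto simp: twice_differentiable_on_def)
    have "pdir b (pdir b (\<lambda>y. g y - c * (norm y)\<^sup>2)) y = pdir b (pdir b g) y - 2 * c"
      if "b \<in> Basis" for b
    proof -
      have "pdir b g differentiable at y"
        using assms(2) \<open>y \<in> S\<close> that by (simp add: twice_differentiable_on_def)
      note Dg = has_derivative_pdir[OF this[unfolded frechet_derivative_works]]
      show ?thesis
        using has_derivative_pdir[OF pdir_h_deriv[OF \<open>y \<in> S\<close> that]] that by (simp add: Dg)
    qed
    then show "(\<Sum>b\<in>Basis. pdir b (pdir b (\<lambda>y. g y - c * (norm y)\<^sup>2)) y) = 0"
      using assms(3)[OF \<open>y \<in> S\<close>] by (simp add: sum_subtractf)
  qed
qed

lemma d0_d0_constant:
  fixes f :: "real \<times> real \<times> real \<Rightarrow> real"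
  assumes "open A" "convex A" "open B" "convex B" "t0 \<in> A" "y0 \<in> B"
    and "twice_differentiable_on (A \<times> B) f"
    and system: "\<And>x. x \<in> A \<times> B \<Longrightarrow> inframonogenic_system f x"
    and t: "t \<in> A" and y: "y \<in> B"
  shows "d0 (d0 f) (t, y) = d0 (d0 f) (t0, y0)"
proof -
  note pde = system[unfolded inframonogenic_system_def]
  note diff = twice_differentiable_onD[OF assms(7)]
  have d0_indep: "d0 f (s, z) = d0 f (s, y0)" if "s \<in> A" "z \<in> B" for s z
  proof (rule constant_if_pdir_Basis_zero[OF assms(4) _ _ \<open>z \<in> B\<close> assms(6)])
    fix w assume "w \<in> B"
    then show "(\<lambda>w. d0 f (s, w)) differentiable at w"
      using diff(2)[of "(s, w)"] \<open>s \<in> A\<close> by (simp add: differentiable_at_slice_snd)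
  next
    fix w b assume "w \<in> B" "b \<in> (Basis :: (real \<times> real) set)"
    then show "pdir b (\<lambda>w. d0 f (s, w)) w = 0"
      using pde[of "(s, w)"] \<open>s \<in> A\<close> by (auto simp: Basis_real_pair simp flip: d1_slice d2_slice)
  qed
  have d12_indep: "F (s, z) = F (t0, z)" if "F = d1 f \<or> F = d2 f" "s \<in> A" "z \<in> B" for F s z
  proof (rule constant_if_pdir_Basis_zero[OF assms(2) _ _ \<open>s \<in> A\<close> assms(5)])
    fix r assume "r \<in> A"
    then show "(\<lambda>r. F (r, z)) differentiable at r"
      using diff(3,4)[of "(r, z)"] that by (auto simp: differentiable_at_slice_fst)
  next
    fix r b assume "r \<in> A" "b \<in> (Basis :: real set)"
    then show "pdir b (\<lambda>r. F (r, z)) r = 0"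
      using pde[of "(r, z)"] that by (auto simp: Basis_real_def simp flip: d0_slice)
  qed
  have "d0 (d0 f) (t, y) = d0 (d0 f) (t, y0)"
    unfolding d0_slice[of "d0 f"]
    by (rule pdir_cong_open[OF assms(1) t]) (use d0_indep y in simp)
  also have "\<dots> = d1 (d1 f) (t, y0) + d2 (d2 f) (t, y0)"
    using pde assms(6) t by simp
  also have "\<dots> = d1 (d1 f) (t0, y0) + d2 (d2 f) (t0, y0)"
    unfolding d1_slice[of "d1 f"] d2_slice[of "d2 f"]
    using pdir_cong_open[OF assms(3,6), of "\<lambda>z. d1 f (t, z)" "\<lambda>z. d1 f (t0, z)"]
      pdir_cong_open[OF assms(3,6), of "\<lambda>z. d2 f (t, z)" "\<lambda>z. d2 f (t0, z)"]
      d12_indep t by simp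
  also have "\<dots> = d0 (d0 f) (t0, y0)"
    using pde assms(5,6) by simp
  finally show ?thesis .
qed

lemma d0_affine_if_d0_d0_constant:
  fixes f :: "real \<times> real \<times> real \<Rightarrow> real"
  assumes "convex U" "\<And>x. x \<in> U \<Longrightarrow> d0 f differentiable at x"
    and "\<And>x. x \<in> U \<Longrightarrow> d0 (d0 f) x = K \<and> d1 (d0 f) x = 0 \<and> d2 (d0 f) x = 0"
    and "x \<in> U" "x' \<in> U"
  shows "d0 f x = d0 f x' + K * (fst x - fst x')"
proof -
  have lin: "((\<lambda>x. K * fst x) has_derivative (\<lambda>w. K * fst w)) (at z)" for z :: "real \<times> real \<times> real"
    by (auto intro!: derivative_eq_intros)
  have "d0 f x - K * fst x = d0 f x' - K * fst x'"
  proof (rule constant_if_pdir_Basis_zero[OF assms(1) _ _ assms(4,5)])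
    fix z assume "z \<in> U"
    then show "(\<lambda>x. d0 f x - K * fst x) differentiable at z"
      by (rule differentiable_diff[OF assms(2) differentiableI[OF lin]])
  next
    fix z b :: "real \<times> real \<times> real" assume "z \<in> U" "b \<in> Basis"
    have "pdir b (\<lambda>x. d0 f x - K * fst x) z = pdir b (d0 f) z - K * fst b"
      using pdir_diff[OF assms(2)[OF \<open>z \<in> U\<close>] differentiableI[OF lin]]
      by (simp add: has_derivative_pdir[OF lin])
    then show "pdir b (\<lambda>x. d0 f x - K * fst x) z = 0"
      using \<open>b \<in> Basis\<close> assms(3)[OF \<open>z \<in> U\<close>] by (auto simp: Basis_real_triple d0_def d1_def d2_def)
  qed
  then show ?thesis by (simp add: algebra_simps)
qed

lemma quadratic_in_x0_if_d0_affine: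
  fixes f :: "real \<times> real \<times> real \<Rightarrow> real"
  assumes "convex A" "\<And>s. s \<in> A \<Longrightarrow> f differentiable at (s, y)"
    and "\<And>s. s \<in> A \<Longrightarrow> d0 f (s, y) = K * s + c"
    and "t \<in> A" "t0 \<in> A"
  shows "f (t, y) = f (t0, y) + K / 2 * (t\<^sup>2 - t0\<^sup>2) + c * (t - t0)"
proof -
  define P where "P s = K / 2 * s\<^sup>2 + c * s" for s :: real
  have P: "(P has_derivative (\<lambda>w. (K * s + c) * w)) (at s)" for s
    unfolding P_def by (auto intro!: derivative_eq_intros simp: algebra_simps)
  have Pd: "P differentiable at s" for s
    using P by (rule differentiableI)
  have fy: "(\<lambda>s. f (s, y)) differentiable at s" if "s \<in> A" for s
    using assms(2)[OF that] by (rule differentiable_at_slice_fst)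
  have "f (t, y) - P t = f (t0, y) - P t0"
  proof (rule constant_if_pdir_Basis_zero[OF assms(1) _ _ assms(4,5)])
    fix s assume "s \<in> A"
    then show "(\<lambda>s. f (s, y) - P s) differentiable at s"
      by (rule differentiable_diff[OF fy Pd])
  next
    fix s b :: real assume "s \<in> A" "b \<in> Basis"
    then show "pdir b (\<lambda>s. f (s, y) - P s) s = 0"
      using pdir_diff[OF fy[OF \<open>s \<in> A\<close>] Pd] assms(3)[OF \<open>s \<in> A\<close>]
      by (simp add: Basis_real_def has_derivative_pdir[OF P] flip: d0_slice)
  qed
  then show ?thesis unfolding P_def by (simp add: algebra_simps)
qed

lemma normal_form_from_inframonogenic_system:
  fixes f :: "real \<times> real \<times> real \<Rightarrow> real"
  assumes "open A" "convex A" "open B" "convex B" "t0 \<in> A" "y0 \<in> B"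
    and tw: "twice_differentiable_on (A \<times> B) f"
    and system: "\<And>x. x \<in> A \<times> B \<Longrightarrow> inframonogenic_system f x"
  shows "\<exists>c0 c1 c2 h. harmonic_on B h \<and> (\<forall>t\<in>A. \<forall>y\<in>B.
           f (t, y) = c0 * (2 * t\<^sup>2 + (fst y)\<^sup>2 + (snd y)\<^sup>2) + c1 * t + c2 + h y)"
proof -
  note pde = system[unfolded inframonogenic_system_def]
  note diff = twice_differentiable_onD[OF tw]
  define K where "K = d0 (d0 f) (t0, y0)"
  have K: "d0 (d0 f) x = K" if "x \<in> A \<times> B" for x
    using d0_d0_constant[OF assms(1-6) tw system] that unfolding K_def by auto
  define c1 where "c1 = d0 f (t0, y0) - K * t0"
  have "d0 f x = K * fst x + c1" if "x \<in> A \<times> B" for x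
    using d0_affine_if_d0_d0_constant[of "A \<times> B" f K x "(t0, y0)"] that assms pde K diff(2)
    unfolding c1_def by (auto simp: convex_Times algebra_simps)
  then have f_eq: "f (t, y) = f (t0, y) + K / 2 * (t\<^sup>2 - t0\<^sup>2) + c1 * (t - t0)"
    if "t \<in> A" "y \<in> B" for t y
    using quadratic_in_x0_if_d0_affine[OF assms(2) _ _ that(1) assms(5)] diff(1) that by simp
  define h where "h y = f (t0, y) - K / 4 * (norm y)\<^sup>2" for y :: "real \<times> real"
  have "harmonic_on B h"
    unfolding h_def
  proof (rule harmonic_on_diff_norm_square[OF assms(3)])
    show "twice_differentiable_on B (\<lambda>y. f (t0, y))"
      using assms(5) by (intro twice_differentiable_on_slice_snd[OF tw]) simp
    fix y assume "y \<in> B"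
    have "(\<Sum>b\<in>Basis. pdir b (pdir b (\<lambda>z. f (t0, z))) y) = d1 (d1 f) (t0, y) + d2 (d2 f) (t0, y)"
      by (simp add: Basis_real_pair d1_def d2_def pdir_slice_snd)
    also have "\<dots> = K"
      using pde[of "(t0, y)"] K[of "(t0, y)"] assms(5) \<open>y \<in> B\<close> by simp
    finally show "(\<Sum>b\<in>Basis. pdir b (pdir b (\<lambda>z. f (t0, z))) y) = 2 * real DIM(real \<times> real) * (K / 4)"
      by simp
  qed
  moreover have "f (t, y) = K / 4 * (2 * t\<^sup>2 + (fst y)\<^sup>2 + (snd y)\<^sup>2) + c1 * t
      + (- K / 2 * t0\<^sup>2 - c1 * t0) + h y" if "t \<in> A" "y \<in> B" for t y
    using f_eq[OF that] by (cases y) (simp add: h_def norm_Pair algebra_simps)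
  ultimately show ?thesis by blast
qed

lemma open_contains_convex_Times:
  fixes p :: "'a::euclidean_space \<times> 'b::euclidean_space"
  assumes "open S" "p \<in> S"
  obtains A B where "open A" "convex A" "open B" "convex B" "p \<in> A \<times> B" "A \<times> B \<subseteq> S"
proof -
  obtain a b where "box a b \<subseteq> S" "p \<in> box a b"
    using open_contains_box[OF assms] by metis
  then show ?thesis
    using that[of "box (fst a) (fst b)" "box (snd a) (snd b)"] by (simp add: box_prod open_box)
qed

theorem proposition2p5:
  fixes \<Omega> :: "(real \<times> real \<times> real) set" and f0 :: "real \<times> real \<times> real \<Rightarrow> real"
  assumes "open \<Omega>" and "connected \<Omega>"
    and "twice_differentiable_on \<Omega> f0"
    and "inframonogenic_on \<Omega> (\<lambda>x. qreal (f0 x))"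
  shows "\<forall>p\<in>\<Omega>. \<exists>U. open U \<and> p \<in> U \<and> U \<subseteq> \<Omega> \<and>
           (\<exists>c0 c1 c2 :: real. \<exists>h :: real \<times> real \<Rightarrow> real.
              harmonic_on ((\<lambda>(x0, x1, x2). (x1, x2)) ` U) h \<and>
              (\<forall>(x0, x1, x2)\<in>U.
                 f0 (x0, x1, x2) = c0 * (2 * x0\<^sup>2 + x1\<^sup>2 + x2\<^sup>2) + c1 * x0 + c2 + h (x1, x2)))"
proof (rule ballI, goal_cases)
  case (1 p)
  with assms(1) obtain A B where AB: "open A" "convex A" "open B" "convex B" "p \<in> A \<times> B"
    and "A \<times> B \<subseteq> \<Omega>"
    by (rule open_contains_convex_Times)
  then have "twice_differentiable_on (A \<times> B) f0"
    and "\<And>x. x \<in> A \<times> B \<Longrightarrow> inframonogenic_system f0 x"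
    using assms(3) inframonogenic_real_imp_system[OF assms(1,3,4)]
    by (auto simp: twice_differentiable_on_def)
  then obtain c0 c1 c2 h where "harmonic_on B h"
    and "\<forall>t\<in>A. \<forall>y\<in>B. f0 (t, y) = c0 * (2 * t\<^sup>2 + (fst y)\<^sup>2 + (snd y)\<^sup>2) + c1 * t + c2 + h y"
    using normal_form_from_inframonogenic_system[OF AB(1-4)] AB(5) by (cases p) blast
  moreover have "(\<lambda>(x0, x1, x2). (x1, x2)) ` (A \<times> B) = B"
    using AB(5) by force
  ultimately show ?case
    using AB \<open>A \<times> B \<subseteq> \<Omega>\<close>
    by (intro exI[of _ "A \<times> B"] conjI exI[of _ c0] exI[of _ c1] exI[of _ c2] exI[of _ h])
      (auto simp: open_Times)
qed

end
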